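(* Let $N\ge 2$ and let $f:\mathbb{C}\to\mathbb{C}^N$ be the Veronese map $f(\zeta)=\left(\binom{N-1}{k}^{1/2}\zeta^k\right)_{k=0}^{N-1}$, so $|f|^2=(1+|\zeta|^2)^{N-1}$. Define $P_+^0 f=f$, $P_+^{k+1}f=P_+(P_+^k f)$, where $P_+ g=\partial g-g\,\frac{g^\dagger\cdot\partial g}{g^\dagger\cdot g}$, $\partial=\partial/\partial\zeta$, $\bar\partial=\partial/\partial\bar\zeta$, and let $P_k=\frac{P_+^k f\otimes (P_+^k f)^\dagger}{|P_+^k f|^2}$ for $k=0,\dots,N-1$. Let $\alpha_0,\dots,\alpha_{N-2}$ be real constants, not all zero, and $\mathbb{P}=\sum_{k=0}^{N-2}\alpha_kP_k$. Then the induced metric of the associated surface satisfies $g_{++}=\operatorname{tr}(\partial\mathbb{P}\partial\mathbb{P})=0$ and $$g_{+-}=\operatorname{tr}(\partial\mathbb{P}\,\bar\partial\mathbb{P})=\frac{\alpha}{(1+|\zeta|^2)^2}$$ for some positive constant $\alpha$ (depending on $N$ and the $\alpha_k$). Consequently the surface has constant curvature $$K:=-\frac{4}{g_{+-}}\,\partial\bar\partial\ln g_{+-}=\frac{8}{\alpha}.$$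
   Context: Here $\zeta$ is the complex coordinate on the plane obtained from $S^2$ by stereographic projection, $\dagger$ denotes Hermitian conjugation, $g^\dagger\cdot h=\sum_i\bar g^ih^i$, $|g|^2=g^\dagger\cdot g$. The vectors $P_+^kf$ define harmonic maps $S^2\to CP^{N-1}$ (the Veronese sequence). The Hermitian matrix $\mathbb{P}$ defines a surface in $\mathbb{R}^{N^2-1}$ (coordinates: real and imaginary parts of its entries), whose metric components are $g_{++}=\operatorname{tr}(\partial\mathbb{P}\partial\mathbb{P})$, $g_{+-}=\operatorname{tr}(\partial\mathbb{P}\bar\partial\mathbb{P})$, $g_{--}=\overline{g_{++}}$, and whose curvature (when $g_{++}=0$) is $K=-\frac{4}{g_{+-}}\partial\bar\partial\ln g_{+-}$. *)

theory Defs
  imports "HOL-Analysis.Analysis"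
begin

definition dpx :: "(complex \<Rightarrow> complex) \<Rightarrow> complex \<Rightarrow> complex" where
  "dpx F z = vector_derivative (\<lambda>t::real. F (z + of_real t)) (at 0)"

definition dpy :: "(complex \<Rightarrow> complex) \<Rightarrow> complex \<Rightarrow> complex" where
  "dpy F z = vector_derivative (\<lambda>t::real. F (z + \<i> * of_real t)) (at 0)"

definition dz :: "(complex \<Rightarrow> complex) \<Rightarrow> complex \<Rightarrow> complex" where
  "dz F z = (dpx F z - \<i> * dpy F z) / 2"

definition dzb :: "(complex \<Rightarrow> complex) \<Rightarrow> complex \<Rightarrow> complex" where
  "dzb F z = (dpx F z + \<i> * dpy F z) / 2"

text \<open>Vectors in C^N are functions nat => complex, with indices 0..N-1.\<close>
definition herm :: "nat \<Rightarrow> (nat \<Rightarrow> complex) \<Rightarrow> (nat \<Rightarrow> complex) \<Rightarrow> complex" where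
  "herm N g h = (\<Sum>i<N. cnj (g i) * h i)"

definition dzvec :: "(complex \<Rightarrow> nat \<Rightarrow> complex) \<Rightarrow> complex \<Rightarrow> nat \<Rightarrow> complex" where
  "dzvec g z = (\<lambda>i. dz (\<lambda>w. g w i) z)"

definition Pplus :: "nat \<Rightarrow> (complex \<Rightarrow> nat \<Rightarrow> complex) \<Rightarrow> complex \<Rightarrow> nat \<Rightarrow> complex" where
  "Pplus N g = (\<lambda>z i. dzvec g z i
      - g z i * herm N (g z) (dzvec g z) / herm N (g z) (g z))"

definition veronese :: "nat \<Rightarrow> complex \<Rightarrow> nat \<Rightarrow> complex" where
  "veronese N z = (\<lambda>k. of_real (sqrt (real ((N - 1) choose k))) * z ^ k)"

definition projector :: "nat \<Rightarrow> nat \<Rightarrow> complex \<Rightarrow> nat \<Rightarrow> nat \<Rightarrow> complex" where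
  "projector N k z = (let v = (Pplus N ^^ k) (veronese N) z in
      (\<lambda>i j. v i * cnj (v j) / herm N v v))"

definition Pmat :: "nat \<Rightarrow> (nat \<Rightarrow> real) \<Rightarrow> complex \<Rightarrow> nat \<Rightarrow> nat \<Rightarrow> complex" where
  "Pmat N \<alpha> z = (\<lambda>i j. \<Sum>k\<le>N - 2. of_real (\<alpha> k) * projector N k z i j)"

definition trprod :: "nat \<Rightarrow> (nat \<Rightarrow> nat \<Rightarrow> complex) \<Rightarrow> (nat \<Rightarrow> nat \<Rightarrow> complex) \<Rightarrow> complex" where
  "trprod N A B = (\<Sum>i<N. \<Sum>j<N. A i j * B j i)"

definition gpp :: "nat \<Rightarrow> (nat \<Rightarrow> real) \<Rightarrow> complex \<Rightarrow> complex" where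
  "gpp N \<alpha> z = trprod N (\<lambda>i j. dz (\<lambda>w. Pmat N \<alpha> w i j) z) (\<lambda>i j. dz (\<lambda>w. Pmat N \<alpha> w i j) z)"

definition gpm :: "nat \<Rightarrow> (nat \<Rightarrow> real) \<Rightarrow> complex \<Rightarrow> complex" where
  "gpm N \<alpha> z = trprod N (\<lambda>i j. dz (\<lambda>w. Pmat N \<alpha> w i j) z) (\<lambda>i j. dzb (\<lambda>w. Pmat N \<alpha> w i j) z)"

end

theory Submission
  imports Defs
begin

text \<open>
  Write \<open>f\<^sub>k = P\<^sub>+\<^sup>k f\<close> and \<open>\<rho> = 1 + |\<zeta>|\<^sup>2\<close>. By induction on \<open>k\<close>, the \<open>f\<^sub>k\<close> are mutually
  orthogonal, \<open>|f\<^sub>k|\<^sup>2 = c\<^sub>k \<rho>\<^bsup>N-1-2k\<^esup>\<close>, \<open>f\<^sub>k\<^sub>+\<^sub>1 = dz f\<^sub>k - (dz ln |f\<^sub>k|\<^sup>2) f\<^sub>k\<close> and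
  \<open>dzb f\<^sub>k = - (|f\<^sub>k|\<^sup>2 / |f\<^sub>k\<^sub>-\<^sub>1|\<^sup>2) f\<^sub>k\<^sub>-\<^sub>1\<close> with \<open>|f\<^sub>k|\<^sup>2 / |f\<^sub>k\<^sub>-\<^sub>1|\<^sup>2 = k (N - k) / \<rho>\<^sup>2\<close>.
  Hence \<open>dz P\<^sub>k = E\<^sub>k - E\<^sub>k\<^sub>-\<^sub>1\<close> with \<open>E\<^sub>k = f\<^sub>k\<^sub>+\<^sub>1 \<otimes> f\<^sub>k\<^sup>\<dagger> / |f\<^sub>k|\<^sup>2\<close>, summation by parts gives
  \<open>dz \<bbbP> = \<Sum>\<^sub>k (\<alpha>\<^sub>k - \<alpha>\<^sub>k\<^sub>+\<^sub>1) E\<^sub>k\<close>, and \<open>dzb \<bbbP> = (dz \<bbbP>)\<^sup>\<dagger>\<close>. Orthogonality kills every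
  \<open>tr (E\<^sub>k E\<^sub>l)\<close> and every \<open>tr (E\<^sub>k E\<^sub>l\<^sup>\<dagger>)\<close> with \<open>k \<noteq> l\<close>, while
  \<open>tr (E\<^sub>k E\<^sub>k\<^sup>\<dagger>) = |f\<^sub>k\<^sub>+\<^sub>1|\<^sup>2 / |f\<^sub>k|\<^sup>2 = (k + 1) (N - k - 1) / \<rho>\<^sup>2\<close>. So \<open>g\<^sub>+\<^sub>- = \<alpha> / \<rho>\<^sup>2\<close> with
  \<open>\<alpha> = \<Sum>\<^sub>k (\<alpha>\<^sub>k - \<alpha>\<^sub>k\<^sub>+\<^sub>1)\<^sup>2 (k + 1) (N - k - 1) > 0\<close>, the round metric of curvature \<open>8 / \<alpha>\<close>.
\<close>

section \<open>Wirtinger calculus\<close>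

lemma wirtinger_derivatives_eq:
  assumes "(F has_derivative (\<lambda>h. A * h + B * cnj h)) (at z)"
  shows "dz F z = A" "dzb F z = B"
proof -
  have "((\<lambda>t::real. F (z + of_real t)) has_vector_derivative (A + B)) (at 0)"
  proof -
    have line: "((\<lambda>t::real. z + of_real t) has_derivative (\<lambda>t. of_real t)) (at 0)"
      by (auto intro!: derivative_eq_intros)
    have "((\<lambda>t::real. F (z + of_real t)) has_derivative
        (\<lambda>t. A * of_real t + B * cnj (of_real t))) (at 0)"
      using has_derivative_compose[OF line, of F "\<lambda>h. A * h + B * cnj h"] assms by simp
    then show ?thesis unfolding has_vector_derivative_def
      by (rule has_derivative_eq_rhs) (auto simp: algebra_simps scaleR_conv_of_real)
  qed
  then have dpx: "dpx F z = A + B"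
    unfolding dpx_def by (rule vector_derivative_at)
  have "((\<lambda>t::real. F (z + \<i> * of_real t)) has_vector_derivative (\<i> * A - \<i> * B)) (at 0)"
  proof -
    have line: "((\<lambda>t::real. z + \<i> * of_real t) has_derivative (\<lambda>t. \<i> * of_real t)) (at 0)"
      by (auto intro!: derivative_eq_intros)
    have "((\<lambda>t::real. F (z + \<i> * of_real t)) has_derivative
        (\<lambda>t. A * (\<i> * of_real t) + B * cnj (\<i> * of_real t))) (at 0)"
      using has_derivative_compose[OF line, of F "\<lambda>h. A * h + B * cnj h"] assms by simp
    then show ?thesis unfolding has_vector_derivative_def
      by (rule has_derivative_eq_rhs) (auto simp: algebra_simps scaleR_conv_of_real)
  qed
  then have dpy: "dpy F z = \<i> * A - \<i> * B"
    unfolding dpy_def by (rule vector_derivative_at)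
  show "dz F z = A" "dzb F z = B"
    unfolding dz_def dzb_def dpx dpy by (simp_all add: algebra_simps)
qed

definition wirtinger_differentiable :: "(complex \<Rightarrow> complex) \<Rightarrow> bool" where
  "wirtinger_differentiable F \<longleftrightarrow>
     (\<forall>z. (F has_derivative (\<lambda>h. dz F z * h + dzb F z * cnj h)) (at z))"

lemma wirtinger_differentiableI:
  assumes "\<And>z. (F has_derivative (\<lambda>h. A z * h + B z * cnj h)) (at z)"
  shows "wirtinger_differentiable F" "dz F = A" "dzb F = B"
proof -
  show A: "dz F = A" and B: "dzb F = B"
    using wirtinger_derivatives_eq[OF assms] by auto
  show "wirtinger_differentiable F"
    unfolding wirtinger_differentiable_def A B using assms by auto
qed

lemma wirtinger_differentiableD:
  "wirtinger_differentiable F \<Longrightarrow> (F has_derivative (\<lambda>h. dz F z * h + dzb F z * cnj h)) (at z)"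
  unfolding wirtinger_differentiable_def by auto

lemma wirtinger_const:
  "wirtinger_differentiable (\<lambda>z. c)" "dz (\<lambda>z. c) = (\<lambda>z. 0)" "dzb (\<lambda>z. c) = (\<lambda>z. 0)"
  by (rule wirtinger_differentiableI[where A="\<lambda>z. 0" and B="\<lambda>z. 0"], simp)+

lemma wirtinger_ident:
  "wirtinger_differentiable (\<lambda>z. z)" "dz (\<lambda>z. z) = (\<lambda>z. 1)" "dzb (\<lambda>z. z) = (\<lambda>z. 0)"
  by (rule wirtinger_differentiableI[where A="\<lambda>z. 1" and B="\<lambda>z. 0"], simp)+

lemma wirtinger_cnj_ident:
  "wirtinger_differentiable (\<lambda>z. cnj z)" "dz (\<lambda>z. cnj z) = (\<lambda>z. 0)" "dzb (\<lambda>z. cnj z) = (\<lambda>z. 1)"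
  by (rule wirtinger_differentiableI[where A="\<lambda>z. 0" and B="\<lambda>z. 1"],
      simp add: bounded_linear.has_derivative[OF bounded_linear_cnj])+

lemma wirtinger_add:
  assumes "wirtinger_differentiable F" "wirtinger_differentiable G"
  shows "wirtinger_differentiable (\<lambda>z. F z + G z)"
    "dz (\<lambda>z. F z + G z) = (\<lambda>z. dz F z + dz G z)"
    "dzb (\<lambda>z. F z + G z) = (\<lambda>z. dzb F z + dzb G z)"
  by (rule wirtinger_differentiableI[where A="\<lambda>z. dz F z + dz G z" and B="\<lambda>z. dzb F z + dzb G z"],
      rule has_derivative_eq_rhs[OF has_derivative_add[OF
          wirtinger_differentiableD[OF assms(1)] wirtinger_differentiableD[OF assms(2)]]],
      simp add: algebra_simps)+

lemma wirtinger_diff: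
  assumes "wirtinger_differentiable F" "wirtinger_differentiable G"
  shows "wirtinger_differentiable (\<lambda>z. F z - G z)"
    "dz (\<lambda>z. F z - G z) = (\<lambda>z. dz F z - dz G z)"
    "dzb (\<lambda>z. F z - G z) = (\<lambda>z. dzb F z - dzb G z)"
  by (rule wirtinger_differentiableI[where A="\<lambda>z. dz F z - dz G z" and B="\<lambda>z. dzb F z - dzb G z"],
      rule has_derivative_eq_rhs[OF has_derivative_diff[OF
          wirtinger_differentiableD[OF assms(1)] wirtinger_differentiableD[OF assms(2)]]],
      simp add: algebra_simps)+

lemma wirtinger_minus:
  assumes "wirtinger_differentiable F"
  shows "wirtinger_differentiable (\<lambda>z. - F z)"
    "dz (\<lambda>z. - F z) = (\<lambda>z. - dz F z)" "dzb (\<lambda>z. - F z) = (\<lambda>z. - dzb F z)"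
  by (rule wirtinger_differentiableI[where A="\<lambda>z. - dz F z" and B="\<lambda>z. - dzb F z"],
      rule has_derivative_eq_rhs[OF has_derivative_minus[OF wirtinger_differentiableD[OF assms]]],
      simp add: algebra_simps)+

lemma wirtinger_mult:
  assumes "wirtinger_differentiable F" "wirtinger_differentiable G"
  shows "wirtinger_differentiable (\<lambda>z. F z * G z)"
    "dz (\<lambda>z. F z * G z) = (\<lambda>z. F z * dz G z + dz F z * G z)"
    "dzb (\<lambda>z. F z * G z) = (\<lambda>z. F z * dzb G z + dzb F z * G z)"
  by (rule wirtinger_differentiableI[where A="\<lambda>z. F z * dz G z + dz F z * G z" and B="\<lambda>z. F z * dzb G z + dzb F z * G z"],
      rule has_derivative_eq_rhs[OF has_derivative_mult[OF
          wirtinger_differentiableD[OF assms(1)] wirtinger_differentiableD[OF assms(2)]]],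
      simp add: algebra_simps)+

lemma wirtinger_power:
  assumes "wirtinger_differentiable F"
  shows "wirtinger_differentiable (\<lambda>z. F z ^ n)"
    "dz (\<lambda>z. F z ^ n) = (\<lambda>z. of_nat n * F z ^ (n - 1) * dz F z)"
    "dzb (\<lambda>z. F z ^ n) = (\<lambda>z. of_nat n * F z ^ (n - 1) * dzb F z)"
  by (rule wirtinger_differentiableI[where A="\<lambda>z. of_nat n * F z ^ (n - 1) * dz F z" and B="\<lambda>z. of_nat n * F z ^ (n - 1) * dzb F z"],
      rule has_derivative_eq_rhs[OF has_derivative_power[OF wirtinger_differentiableD[OF assms]]],
      simp add: algebra_simps)+

lemma wirtinger_inverse:
  assumes "wirtinger_differentiable F" "\<And>z. F z \<noteq> 0"
  shows "wirtinger_differentiable (\<lambda>z. inverse (F z))"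
    "dz (\<lambda>z. inverse (F z)) = (\<lambda>z. - (dz F z * inverse (F z) ^ 2))"
    "dzb (\<lambda>z. inverse (F z)) = (\<lambda>z. - (dzb F z * inverse (F z) ^ 2))"
  by (rule wirtinger_differentiableI[where A="\<lambda>z. - (dz F z * inverse (F z) ^ 2)" and B="\<lambda>z. - (dzb F z * inverse (F z) ^ 2)"],
      rule has_derivative_eq_rhs[OF Deriv.has_derivative_inverse[OF assms(2)
          wirtinger_differentiableD[OF assms(1)]]],
      simp add: algebra_simps power2_eq_square)+

lemma wirtinger_divide:
  assumes "wirtinger_differentiable F" "wirtinger_differentiable G" "\<And>z. G z \<noteq> 0"
  shows "wirtinger_differentiable (\<lambda>z. F z / G z)"
    "dz (\<lambda>z. F z / G z) = (\<lambda>z. (dz F z * G z - F z * dz G z) / G z ^ 2)"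
    "dzb (\<lambda>z. F z / G z) = (\<lambda>z. (dzb F z * G z - F z * dzb G z) / G z ^ 2)"
proof -
  have quotient: "(\<lambda>z. F z / G z) = (\<lambda>z. F z * inverse (G z))"
    by (simp add: divide_inverse)
  show "wirtinger_differentiable (\<lambda>z. F z / G z)"
    unfolding quotient using assms by (simp add: wirtinger_mult wirtinger_inverse)
  show "dz (\<lambda>z. F z / G z) = (\<lambda>z. (dz F z * G z - F z * dz G z) / G z ^ 2)"
    unfolding quotient using assms apply (simp add: wirtinger_mult wirtinger_inverse)
    by (simp add: fun_eq_iff field_simps power2_eq_square)
  show "dzb (\<lambda>z. F z / G z) = (\<lambda>z. (dzb F z * G z - F z * dzb G z) / G z ^ 2)"
    unfolding quotient using assms apply (simp add: wirtinger_mult wirtinger_inverse)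
    by (simp add: fun_eq_iff field_simps power2_eq_square)
qed

lemma wirtinger_cnj:
  assumes "wirtinger_differentiable F"
  shows "wirtinger_differentiable (\<lambda>z. cnj (F z))"
    "dz (\<lambda>z. cnj (F z)) = (\<lambda>z. cnj (dzb F z))" "dzb (\<lambda>z. cnj (F z)) = (\<lambda>z. cnj (dz F z))"
  by (rule wirtinger_differentiableI[where A="\<lambda>z. cnj (dzb F z)" and B="\<lambda>z. cnj (dz F z)"],
      rule has_derivative_eq_rhs[OF bounded_linear.has_derivative[OF bounded_linear_cnj
          wirtinger_differentiableD[OF assms]]],
      simp add: algebra_simps)+

lemma wirtinger_sum:
  assumes "\<And>i. i \<in> A \<Longrightarrow> wirtinger_differentiable (F i)"
  shows "wirtinger_differentiable (\<lambda>z. \<Sum>i\<in>A. F i z)"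
    "dz (\<lambda>z. \<Sum>i\<in>A. F i z) = (\<lambda>z. \<Sum>i\<in>A. dz (F i) z)"
    "dzb (\<lambda>z. \<Sum>i\<in>A. F i z) = (\<lambda>z. \<Sum>i\<in>A. dzb (F i) z)"
proof -
  have "((\<lambda>z. \<Sum>i\<in>A. F i z) has_derivative
      (\<lambda>h. (\<Sum>i\<in>A. dz (F i) z) * h + (\<Sum>i\<in>A. dzb (F i) z) * cnj h)) (at z)" for z
    by (rule has_derivative_eq_rhs[OF has_derivative_sum[OF wirtinger_differentiableD[OF assms]]])
      (auto simp: fun_eq_iff sum_distrib_left mult.commute sum.distrib)
  then show "wirtinger_differentiable (\<lambda>z. \<Sum>i\<in>A. F i z)"
    "dz (\<lambda>z. \<Sum>i\<in>A. F i z) = (\<lambda>z. \<Sum>i\<in>A. dz (F i) z)"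
    "dzb (\<lambda>z. \<Sum>i\<in>A. F i z) = (\<lambda>z. \<Sum>i\<in>A. dzb (F i) z)"
    by (rule wirtinger_differentiableI)+
qed

lemma wirtinger_Ln:
  assumes "wirtinger_differentiable H" and "\<And>z. H z \<notin> \<real>\<^sub>\<le>\<^sub>0"
  shows "wirtinger_differentiable (\<lambda>z. Ln (H z))"
    "dz (\<lambda>z. Ln (H z)) = (\<lambda>z. dz H z / H z)" "dzb (\<lambda>z. Ln (H z)) = (\<lambda>z. dzb H z / H z)"
proof -
  have "((\<lambda>z. Ln (H z)) has_derivative (\<lambda>h. (dz H z / H z) * h + (dzb H z / H z) * cnj h)) (at z)"
    for z
  proof -
    have "(Ln has_derivative (*) (inverse (H z))) (at (H z))"
      using has_field_derivative_Ln[OF assms(2)] by (simp add: has_field_derivative_def)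
    from has_derivative_compose[OF wirtinger_differentiableD[OF assms(1)] this] show ?thesis
      by (rule has_derivative_eq_rhs) (simp add: fun_eq_iff divide_inverse algebra_simps)
  qed
  then show "wirtinger_differentiable (\<lambda>z. Ln (H z))"
    "dz (\<lambda>z. Ln (H z)) = (\<lambda>z. dz H z / H z)" "dzb (\<lambda>z. Ln (H z)) = (\<lambda>z. dzb H z / H z)"
    by (rule wirtinger_differentiableI)+
qed

lemmas wirtinger_rules = wirtinger_const wirtinger_ident wirtinger_cnj_ident wirtinger_add
  wirtinger_diff wirtinger_minus wirtinger_mult wirtinger_power wirtinger_inverse
  wirtinger_divide wirtinger_cnj

section \<open>Rational functions of \<open>z\<close> and \<open>cnj z\<close>\<close>

text \<open>Denominators are required to vanish nowhere, so that the class is closed under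
  both Wirtinger derivatives and, by induction over its generation, they commute on it.\<close>

inductive zrational :: "(complex \<Rightarrow> complex) \<Rightarrow> bool" where
  zrational_const: "zrational (\<lambda>z. c)"
| zrational_ident: "zrational (\<lambda>z. z)"
| zrational_cnj_ident: "zrational (\<lambda>z. cnj z)"
| zrational_add: "zrational F \<Longrightarrow> zrational G \<Longrightarrow> zrational (\<lambda>z. F z + G z)"
| zrational_mult: "zrational F \<Longrightarrow> zrational G \<Longrightarrow> zrational (\<lambda>z. F z * G z)"
| zrational_inverse: "zrational F \<Longrightarrow> (\<And>z. F z \<noteq> 0) \<Longrightarrow> zrational (\<lambda>z. inverse (F z))"

lemma zrational_wirtinger_differentiable: "zrational F \<Longrightarrow> wirtinger_differentiable F"
  by (induction rule: zrational.induct) (auto intro: wirtinger_rules)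

lemma zrational_minus: "zrational F \<Longrightarrow> zrational (\<lambda>z. - F z)"
  using zrational_mult[OF zrational_const[of "-1"], of F] by simp

lemma zrational_diff: "zrational F \<Longrightarrow> zrational G \<Longrightarrow> zrational (\<lambda>z. F z - G z)"
  using zrational_add[of F "\<lambda>z. - G z"] zrational_minus[of G] by simp

lemma zrational_power: "zrational F \<Longrightarrow> zrational (\<lambda>z. F z ^ n)"
proof (induction n)
  case 0
  then show ?case using zrational_const[of 1] by simp
next
  case (Suc n)
  then show ?case using zrational_mult[of F "\<lambda>z. F z ^ n"] by simp
qed

lemma zrational_divide:
  "zrational F \<Longrightarrow> zrational G \<Longrightarrow> (\<And>z. G z \<noteq> 0) \<Longrightarrow> zrational (\<lambda>z. F z / G z)"
  using zrational_mult[of F "\<lambda>z. inverse (G z)"] zrational_inverse[of G]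
  by (simp add: divide_inverse)

lemma zrational_sum:
  "finite A \<Longrightarrow> (\<And>i. i \<in> A \<Longrightarrow> zrational (F i)) \<Longrightarrow> zrational (\<lambda>z. \<Sum>i\<in>A. F i z)"
proof (induction A rule: finite_induct)
  case empty
  then show ?case using zrational_const[of 0] by simp
next
  case (insert x A)
  then show ?case using zrational_add[of "F x" "\<lambda>z. \<Sum>i\<in>A. F i z"] by simp
qed

lemma zrational_cnj: "zrational F \<Longrightarrow> zrational (\<lambda>z. cnj (F z))"
proof (induction rule: zrational.induct)
  case (zrational_const c)
  then show ?case by (rule zrational.zrational_const)
next
  case zrational_ident
  then show ?case by (rule zrational.zrational_cnj_ident)
next
  case zrational_cnj_ident
  then show ?case using zrational.zrational_ident by simp
next
  case (zrational_add F G)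
  then show ?case using zrational.zrational_add[of "\<lambda>z. cnj (F z)" "\<lambda>z. cnj (G z)"] by simp
next
  case (zrational_mult F G)
  then show ?case using zrational.zrational_mult[of "\<lambda>z. cnj (F z)" "\<lambda>z. cnj (G z)"] by simp
next
  case (zrational_inverse F)
  then show ?case using zrational.zrational_inverse[of "\<lambda>z. cnj (F z)"] by simp
qed

lemma zrational_dz_dzb: "zrational F \<Longrightarrow> zrational (dz F) \<and> zrational (dzb F)"
proof (induction rule: zrational.induct)
  case (zrational_const c)
  then show ?case by (simp add: wirtinger_const zrational.zrational_const)
next
  case zrational_ident
  then show ?case by (simp add: wirtinger_ident zrational.zrational_const)
next
  case zrational_cnj_ident
  then show ?case by (simp add: wirtinger_cnj_ident zrational.zrational_const)
next
  case (zrational_add F G)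
  then show ?case
    by (simp add: wirtinger_add zrational_wirtinger_differentiable zrational.zrational_add)
next
  case (zrational_mult F G)
  then show ?case
    by (simp add: wirtinger_mult zrational_wirtinger_differentiable zrational.zrational_add
        zrational.zrational_mult)
next
  case (zrational_inverse F)
  then show ?case
    by (simp add: wirtinger_inverse zrational_wirtinger_differentiable zrational.zrational_mult
        zrational.zrational_inverse zrational_minus zrational_power)
qed

lemma zrational_dz: "zrational F \<Longrightarrow> zrational (dz F)"
  and zrational_dzb: "zrational F \<Longrightarrow> zrational (dzb F)"
  using zrational_dz_dzb by auto

lemma zrational_dz_dzb_commute: "zrational F \<Longrightarrow> dz (dzb F) = dzb (dz F)"
proof (induction rule: zrational.induct)
  case (zrational_const c)
  then show ?case by (simp add: wirtinger_const)
next
  case zrational_ident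
  then show ?case by (simp add: wirtinger_ident wirtinger_const)
next
  case zrational_cnj_ident
  then show ?case by (simp add: wirtinger_cnj_ident wirtinger_const)
next
  case (zrational_add F G)
  then show ?case
    by (simp add: wirtinger_add zrational_wirtinger_differentiable zrational_dz zrational_dzb)
next
  case (zrational_mult F G)
  then show ?case
    by (simp add: wirtinger_mult wirtinger_add zrational_wirtinger_differentiable
        zrational_dz zrational_dzb algebra_simps)
next
  case (zrational_inverse F)
  have "wirtinger_differentiable F" "wirtinger_differentiable (dz F)"
    "wirtinger_differentiable (dzb F)" "wirtinger_differentiable (dz (dzb F))"
    "wirtinger_differentiable (dzb (dz F))"
    using zrational_inverse
    by (auto intro!: zrational_wirtinger_differentiable zrational_dz zrational_dzb)
  with zrational_inverse show ?case
    by (simp add: wirtinger_inverse wirtinger_mult wirtinger_power wirtinger_minus algebra_simps)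
qed

definition rho :: "complex \<Rightarrow> complex" where
  "rho z = 1 + z * cnj z"

lemma rho_of_real: "rho z = of_real (1 + (cmod z)\<^sup>2)"
  unfolding rho_def using complex_norm_square[of z] by simp

lemma rho_nonzero: "rho z \<noteq> 0"
  unfolding rho_of_real by (smt (verit) of_real_eq_0_iff zero_le_power2)

lemma zrational_rho: "zrational rho"
  unfolding rho_def[abs_def]
  by (intro zrational_add zrational_mult zrational_const zrational_ident zrational_cnj_ident)

lemma wirtinger_rho:
  "wirtinger_differentiable rho" "dz rho = cnj" "dzb rho = (\<lambda>z. z)"
  unfolding rho_def[abs_def] by (simp_all add: wirtinger_rules fun_eq_iff)

section \<open>Hermitian products and traces\<close>

definition dzbvec :: "(complex \<Rightarrow> nat \<Rightarrow> complex) \<Rightarrow> complex \<Rightarrow> nat \<Rightarrow> complex" where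
  "dzbvec g z = (\<lambda>i. dzb (\<lambda>w. g w i) z)"

definition zrational_vec :: "nat \<Rightarrow> (complex \<Rightarrow> nat \<Rightarrow> complex) \<Rightarrow> bool" where
  "zrational_vec N g \<longleftrightarrow> (\<forall>i<N. zrational (\<lambda>z. g z i))"

lemma herm_commute: "cnj (herm N u v) = herm N v u"
  unfolding herm_def by (simp add: mult.commute)

lemma herm_scale_left: "herm N (\<lambda>i. c * u i) v = cnj c * herm N u v"
  unfolding herm_def by (simp add: sum_distrib_left mult.assoc)

lemma herm_scale_right: "herm N u (\<lambda>i. c * v i) = c * herm N u v"
  unfolding herm_def by (simp add: sum_distrib_left mult_ac)

lemma herm_add_left: "herm N (\<lambda>i. v i + w i) u = herm N v u + herm N w u"
  unfolding herm_def by (simp add: sum.distrib algebra_simps)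

lemma herm_diff_right: "herm N u (\<lambda>i. v i - w i) = herm N u v - herm N u w"
  unfolding herm_def by (simp add: sum_subtractf algebra_simps)

lemma herm_cong_left: "(\<And>i. i < N \<Longrightarrow> u i = u' i) \<Longrightarrow> herm N u v = herm N u' v"
  unfolding herm_def by (intro sum.cong) auto

lemma herm_cong_right: "(\<And>i. i < N \<Longrightarrow> v i = v' i) \<Longrightarrow> herm N u v = herm N u v'"
  unfolding herm_def by (intro sum.cong) auto

lemma zrational_herm:
  "zrational_vec N u \<Longrightarrow> zrational_vec N v \<Longrightarrow> zrational (\<lambda>z. herm N (u z) (v z))"
  unfolding herm_def zrational_vec_def
  by (rule zrational_sum) (auto intro!: zrational_mult zrational_cnj)

lemma dz_herm:
  assumes "zrational_vec N u" "zrational_vec N v"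
  shows "dz (\<lambda>z. herm N (u z) (v z))
    = (\<lambda>z. herm N (u z) (dzvec v z) + herm N (dzbvec u z) (v z))"
proof -
  have wd: "wirtinger_differentiable (\<lambda>z. u z i)" "wirtinger_differentiable (\<lambda>z. v z i)"
    if "i < N" for i
    using assms that unfolding zrational_vec_def by (auto intro: zrational_wirtinger_differentiable)
  then have "dz (\<lambda>z. herm N (u z) (v z)) = (\<lambda>z. \<Sum>i<N. dz (\<lambda>z. cnj (u z i) * v z i) z)"
    unfolding herm_def by (intro wirtinger_sum wirtinger_mult wirtinger_cnj) auto
  also have "\<dots> = (\<lambda>z. \<Sum>i<N. cnj (u z i) * dz (\<lambda>z. v z i) z + cnj (dzb (\<lambda>z. u z i) z) * v z i)"
    using wd by (intro ext sum.cong refl) (simp add: wirtinger_mult wirtinger_cnj)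
  finally show ?thesis
    by (simp add: herm_def dzvec_def dzbvec_def sum.distrib)
qed

lemma dzb_herm:
  assumes "zrational_vec N u" "zrational_vec N v"
  shows "dzb (\<lambda>z. herm N (u z) (v z))
    = (\<lambda>z. herm N (u z) (dzbvec v z) + herm N (dzvec u z) (v z))"
proof -
  have wd: "wirtinger_differentiable (\<lambda>z. u z i)" "wirtinger_differentiable (\<lambda>z. v z i)"
    if "i < N" for i
    using assms that unfolding zrational_vec_def by (auto intro: zrational_wirtinger_differentiable)
  then have "dzb (\<lambda>z. herm N (u z) (v z)) = (\<lambda>z. \<Sum>i<N. dzb (\<lambda>z. cnj (u z i) * v z i) z)"
    unfolding herm_def by (intro wirtinger_sum wirtinger_mult wirtinger_cnj) auto
  also have "\<dots> = (\<lambda>z. \<Sum>i<N. cnj (u z i) * dzb (\<lambda>z. v z i) z + cnj (dz (\<lambda>z. u z i) z) * v z i)"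
    using wd by (intro ext sum.cong refl) (simp add: wirtinger_mult wirtinger_cnj)
  finally show ?thesis
    by (simp add: herm_def dzvec_def dzbvec_def sum.distrib)
qed

lemma sum_atMost_mult_backward_diff:
  fixes a E :: "nat \<Rightarrow> 'a::comm_ring"
  shows "(\<Sum>k\<le>M. a k * (E k - (if k = 0 then 0 else E (k - 1))))
       = (\<Sum>k\<le>M. (a k - (if k < M then a (Suc k) else 0)) * E k)"
proof (induction M)
  case 0
  then show ?case by simp
next
  case (Suc M)
  have "(\<Sum>k\<le>M. (a k - a (Suc k)) * E k)
      = (\<Sum>k\<le>M. (a k - (if k < M then a (Suc k) else 0)) * E k - (if k = M then a (Suc M) * E M else 0))"
    by (intro sum.cong) (auto simp: algebra_simps)
  also have "\<dots> = (\<Sum>k\<le>M. (a k - (if k < M then a (Suc k) else 0)) * E k) - a (Suc M) * E M"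
    by (simp add: sum_subtractf)
  finally show ?case
    using Suc by (simp add: algebra_simps)
qed

lemma trprod_cong:
  "(\<And>i j. i < N \<Longrightarrow> j < N \<Longrightarrow> A i j = A' i j) \<Longrightarrow> (\<And>i j. i < N \<Longrightarrow> j < N \<Longrightarrow> B i j = B' i j)
   \<Longrightarrow> trprod N A B = trprod N A' B'"
  unfolding trprod_def by (intro sum.cong refl) auto

lemma trprod_sum_sum:
  "trprod N (\<lambda>i j. \<Sum>k\<in>K. g k * X k i j) (\<lambda>i j. \<Sum>l\<in>K. h l * Y l i j)
   = (\<Sum>k\<in>K. \<Sum>l\<in>K. g k * h l * trprod N (X k) (Y l))"
proof -
  have "trprod N (\<lambda>i j. \<Sum>k\<in>K. g k * X k i j) (\<lambda>i j. \<Sum>l\<in>K. h l * Y l i j)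
      = (\<Sum>i<N. \<Sum>j<N. \<Sum>k\<in>K. \<Sum>l\<in>K. g k * h l * (X k i j * Y l j i))"
    unfolding trprod_def sum_product by (simp add: mult_ac)
  also have "\<dots> = (\<Sum>i<N. \<Sum>k\<in>K. \<Sum>j<N. \<Sum>l\<in>K. g k * h l * (X k i j * Y l j i))"
    by (simp add: sum.swap[of _ "{..<N}" K])
  also have "\<dots> = (\<Sum>k\<in>K. \<Sum>i<N. \<Sum>l\<in>K. \<Sum>j<N. g k * h l * (X k i j * Y l j i))"
    by (subst sum.swap) (simp add: sum.swap[of _ "{..<N}" K])
  also have "\<dots> = (\<Sum>k\<in>K. \<Sum>l\<in>K. \<Sum>i<N. \<Sum>j<N. g k * h l * (X k i j * Y l j i))"
    by (simp add: sum.swap[of _ "{..<N}" K])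
  also have "\<dots> = (\<Sum>k\<in>K. \<Sum>l\<in>K. g k * h l * trprod N (X k) (Y l))"
    unfolding trprod_def by (simp add: sum_distrib_left)
  finally show ?thesis .
qed

lemma trprod_rank_one:
  "trprod N (\<lambda>i j. a i * cnj (b j) / p) (\<lambda>i j. c i * cnj (d j) / q)
    = herm N d a * herm N b c / (p * q)"
  unfolding trprod_def herm_def sum_product sum_divide_distrib
  by (intro sum.cong refl) (simp add: field_simps)

section \<open>The Veronese sequence\<close>

definition vseq :: "nat \<Rightarrow> nat \<Rightarrow> complex \<Rightarrow> nat \<Rightarrow> complex" where
  "vseq N k = (Pplus N ^^ k) (veronese N)"

lemma vseq_0: "vseq N 0 = veronese N"
  and vseq_Suc: "vseq N (Suc k) = Pplus N (vseq N k)"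
  by (simp_all add: vseq_def)

definition vnorm2 :: "nat \<Rightarrow> nat \<Rightarrow> complex \<Rightarrow> complex" where
  "vnorm2 N k z = herm N (vseq N k z) (vseq N k z)"

definition vconst :: "nat \<Rightarrow> nat \<Rightarrow> real" where
  "vconst N k = (\<Prod>i<k. real (Suc i * (N - 1 - i)))"

text \<open>\<open>vratio N k\<close> will turn out to be \<open>|f\<^sub>k|\<^sup>2 / |f\<^sub>k\<^sub>-\<^sub>1|\<^sup>2\<close> and \<open>vlogder N k\<close> to be
  \<open>dz ln |f\<^sub>k|\<^sup>2\<close>. Since \<open>vratio N 0 = 0\<close>, the last clause of \<open>veronese_props N 0\<close> says that
  \<open>f\<^sub>0\<close> is holomorphic, whatever the junk value \<open>vseq N (0 - 1)\<close> is.\<close>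

definition vratio :: "nat \<Rightarrow> nat \<Rightarrow> complex \<Rightarrow> complex" where
  "vratio N k z = of_nat (k * (N - k)) / rho z ^ 2"

definition vlogder :: "nat \<Rightarrow> nat \<Rightarrow> complex \<Rightarrow> complex" where
  "vlogder N k z = of_int (int N - 1 - 2 * int k) * cnj z / rho z"

definition veronese_props :: "nat \<Rightarrow> nat \<Rightarrow> bool" where
  "veronese_props N k \<longleftrightarrow> zrational_vec N (vseq N k)
     \<and> (\<forall>z. vnorm2 N k z = of_real (vconst N k) * rho z ^ (N - 1) / rho z ^ (2 * k))
     \<and> (\<forall>j<k. \<forall>z. herm N (vseq N j z) (vseq N k z) = 0)
     \<and> (\<forall>i<N. dzb (\<lambda>z. vseq N k z i) = (\<lambda>z. - (vratio N k z * vseq N (k - 1) z i)))"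

lemma dz_vratio: "dz (vratio N k) z = vratio N k z * (vlogder N k z - vlogder N (k - 1) z)"
proof (cases k)
  case 0
  then show ?thesis
    unfolding vratio_def[abs_def] by (simp add: wirtinger_rules wirtinger_rho rho_nonzero)
next
  case (Suc j)
  then show ?thesis
    unfolding vratio_def[abs_def] vlogder_def
    by (simp add: wirtinger_rules wirtinger_rho rho_nonzero)
      (simp add: rho_nonzero field_simps power2_eq_square power3_eq_cube eval_nat_numeral)
qed

lemma dzb_vlogder: "dzb (vlogder N k) z = of_int (int N - 1 - 2 * int k) / rho z ^ 2"
  unfolding vlogder_def[abs_def]
  by (simp add: wirtinger_rules wirtinger_rho rho_nonzero) (simp add: rho_def algebra_simps)

lemma vratio_Suc:
  assumes "Suc k < N"
  shows "vratio N (Suc k) z = vratio N k z + dzb (vlogder N k) z"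
proof -
  obtain m where N: "N = Suc (Suc (k + m))"
    using assms by (metis add_Suc_right add_Suc_shift less_iff_Suc_add)
  show ?thesis
    using rho_nonzero[of z] unfolding dzb_vlogder vratio_def by (simp add: N field_simps)
qed

lemma dz_rho_power_ratio:
  assumes "N \<ge> 2"
  shows "dz (\<lambda>z. C * rho z ^ (N - 1) / rho z ^ (2 * k)) z
    = C * rho z ^ (N - 1) / rho z ^ (2 * k) * vlogder N k z"
proof -
  obtain m where N: "N = Suc (Suc m)"
    using assms by (metis add_2_eq_Suc le_Suc_ex)
  \<comment> \<open>the quotient rule for \<open>r = rho z\<close>, \<open>w = dz rho z\<close>, in the form left by the simplifier\<close>
  have "(C * (of_nat (N - Suc 0) * r ^ (N - Suc (Suc 0)) * w) * r ^ (2 * k)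
      - C * r ^ (N - Suc 0) * (2 * of_nat k * r ^ (2 * k - Suc 0) * w)) / (r ^ (2 * k))\<^sup>2
    = C * r ^ (N - Suc 0) * ((of_nat N - 1 - 2 * of_nat k) * w) / (r ^ (2 * k) * r)"
    if r: "r \<noteq> 0" for r w :: complex
  proof (cases k)
    case 0
    then show ?thesis using r by (simp add: N field_simps)
  next
    case (Suc j)
    have e: "2 * k - Suc 0 = Suc (2 * j)" "2 * k = Suc (Suc (2 * j))" using Suc by auto
    show ?thesis unfolding e using r by (simp add: N field_simps power2_eq_square)
  qed
  from this[OF rho_nonzero] show ?thesis
    by (simp add: wirtinger_rules wirtinger_rho rho_nonzero vlogder_def)
qed

lemma vconst_pos: "k \<le> N - 1 \<Longrightarrow> vconst N k > 0"
  unfolding vconst_def by (intro prod_pos) (simp only: of_nat_0_less_iff; simp)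

lemma vconst_Suc: "vconst N (Suc k) = vconst N k * real (Suc k * (N - Suc k))"
  by (simp add: vconst_def)

lemma zrational_vlogder: "zrational (vlogder N k)"
  unfolding vlogder_def[abs_def]
  by (intro zrational_divide zrational_mult zrational_const zrational_cnj_ident zrational_rho
      rho_nonzero)

lemma zrational_vratio: "zrational (vratio N k)"
  unfolding vratio_def[abs_def]
  by (intro zrational_divide zrational_const zrational_power zrational_rho) (simp add: rho_nonzero)

lemma vnorm2_veronese: "N \<ge> 1 \<Longrightarrow> vnorm2 N 0 z = rho z ^ (N - 1)"
proof -
  assume N: "N \<ge> 1"
  have summand: "cnj (veronese N z i) * veronese N z i
      = of_nat ((N - 1) choose i) * (z * cnj z) ^ i * 1 ^ (N - 1 - i)" for i
  proof -
    define s where "s = sqrt (real ((N - 1) choose i))"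
    have "complex_of_real s * of_real s = of_nat ((N - 1) choose i)"
      unfolding s_def of_real_mult[symmetric] by simp
    moreover have "cnj (veronese N z i) * veronese N z i = (complex_of_real s * of_real s) * (z * cnj z) ^ i"
      unfolding veronese_def s_def[symmetric] by (simp add: power_mult_distrib)
    ultimately show ?thesis by simp
  qed
  have "vnorm2 N 0 z = (\<Sum>i\<le>N - 1. of_nat ((N - 1) choose i) * (z * cnj z) ^ i * 1 ^ (N - 1 - i))"
    unfolding vnorm2_def herm_def vseq_0 using N by (intro sum.cong) (auto simp: summand)
  also have "\<dots> = rho z ^ (N - 1)"
    unfolding rho_def binomial_ring[symmetric] by (simp add: add.commute)
  finally show ?thesis .
qed

lemma veronese_props_0: "N \<ge> 1 \<Longrightarrow> veronese_props N 0"
  unfolding veronese_props_def zrational_vec_def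
  by (auto simp: vseq_0 vnorm2_veronese vconst_def vratio_def veronese_def wirtinger_rules
      intro!: zrational_mult zrational_const zrational_power zrational_ident)

lemma herm_vseq_dz:
  assumes N: "N \<ge> 2" and props: "veronese_props N k"
  shows "herm N (vseq N k z) (dzvec (vseq N k) z) = vnorm2 N k z * vlogder N k z"
proof -
  have rat: "zrational_vec N (vseq N k)"
    and norm: "vnorm2 N k = (\<lambda>z. of_real (vconst N k) * rho z ^ (N - 1) / rho z ^ (2 * k))"
    and orth: "\<And>j. j < k \<Longrightarrow> herm N (vseq N j z) (vseq N k z) = 0"
    and lower: "\<And>i. i < N \<Longrightarrow> dzb (\<lambda>z. vseq N k z i) = (\<lambda>z. - (vratio N k z * vseq N (k - 1) z i))"
    using props unfolding veronese_props_def by auto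
  have "herm N (dzbvec (vseq N k) z) (vseq N k z)
      = cnj (- vratio N k z) * herm N (vseq N (k - 1) z) (vseq N k z)"
    unfolding herm_scale_left[symmetric] by (rule herm_cong_left) (simp add: dzbvec_def lower)
  also have "\<dots> = 0"
    using orth[of "k - 1"] by (cases k) (auto simp: vratio_def)
  finally have "dz (vnorm2 N k) z = herm N (vseq N k z) (dzvec (vseq N k) z)"
    unfolding vnorm2_def[abs_def] dz_herm[OF rat rat] by simp
  moreover have "dz (vnorm2 N k) z = vnorm2 N k z * vlogder N k z"
    unfolding norm by (rule dz_rho_power_ratio[OF N])
  ultimately show ?thesis by simp
qed

text \<open>This is the defining recursion \<open>f\<^sub>k\<^sub>+\<^sub>1 = P\<^sub>+ f\<^sub>k\<close>, with the coefficient
  \<open>f\<^sub>k\<^sup>\<dagger> dz f\<^sub>k / |f\<^sub>k|\<^sup>2\<close> evaluated.\<close>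

lemma dz_vseq:
  assumes N: "N \<ge> 2" and k: "k \<le> N - 1" and props: "veronese_props N k"
  shows "dz (\<lambda>z. vseq N k z i) = (\<lambda>z. vseq N (Suc k) z i + vlogder N k z * vseq N k z i)"
proof
  fix z
  have "vnorm2 N k z \<noteq> 0"
    using props vconst_pos[OF k] rho_nonzero[of z] unfolding veronese_props_def by auto
  with herm_vseq_dz[OF N props, of z] show "dz (\<lambda>z. vseq N k z i) z = vseq N (Suc k) z i + vlogder N k z * vseq N k z i"
    unfolding vnorm2_def by (simp add: vseq_Suc Pplus_def dzvec_def mult.commute)
qed

text \<open>The hypothesis on \<open>dz p\<close> is weighted by \<open>a\<close>, so that the step \<open>k = 0\<close>, where
  \<open>a = 0\<close> and \<open>p\<close> is a junk value, is covered as well.\<close>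

lemma dzb_lowering_step:
  assumes "zrational h" "zrational p" "zrational a" "zrational b"
    and dzb_h: "dzb h = (\<lambda>z. - (a z * p z))"
    and dz_p: "\<And>z. a z * dz p z = a z * (h z + b' z * p z)"
    and a': "\<And>z. a' z = a z + dzb b z"
    and dz_a: "\<And>z. dz a z = a z * (b z - b' z)"
  shows "dzb (\<lambda>z. dz h z - b z * h z) = (\<lambda>z. - (a' z * h z))"
proof
  fix z
  have wd: "wirtinger_differentiable h" "wirtinger_differentiable (dz h)"
    "wirtinger_differentiable p" "wirtinger_differentiable a" "wirtinger_differentiable b"
    using assms(1-4) by (auto intro: zrational_wirtinger_differentiable zrational_dz)
  have "dzb (dz h) = dz (dzb h)"
    using zrational_dz_dzb_commute[OF assms(1)] by simp
  with wd have "dzb (\<lambda>z. dz h z - b z * h z) z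
      = - (a z * dz p z + dz a z * p z) - (b z * - (a z * p z) + dzb b z * h z)"
    by (simp add: wirtinger_diff wirtinger_mult wirtinger_minus dzb_h)
  also have "\<dots> = - (a' z * h z)"
    unfolding dz_p dz_a a' by (simp add: algebra_simps)
  finally show "dzb (\<lambda>z. dz h z - b z * h z) z = - (a' z * h z)" .
qed

lemma zrational_vseq_Suc:
  assumes N: "N \<ge> 2" and k: "k \<le> N - 1" and props: "veronese_props N k"
  shows "zrational_vec N (vseq N (Suc k))"
proof -
  have "(\<lambda>z. vseq N (Suc k) z i) = (\<lambda>z. dz (\<lambda>z. vseq N k z i) z - vlogder N k z * vseq N k z i)"
    for i using dz_vseq[OF N k props] by simp
  with props show ?thesis
    unfolding veronese_props_def zrational_vec_def
    by (auto intro!: zrational_diff zrational_dz zrational_mult zrational_vlogder)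
qed

lemma dzb_vseq_Suc:
  assumes N: "N \<ge> 2" and k: "Suc k \<le> N - 1" and props: "\<And>j. j \<le> k \<Longrightarrow> veronese_props N j"
    and i: "i < N"
  shows "dzb (\<lambda>z. vseq N (Suc k) z i) = (\<lambda>z. - (vratio N (Suc k) z * vseq N k z i))"
proof -
  have rat: "zrational (\<lambda>z. vseq N j z i)" if "j \<le> k" for j
    using props[OF that] i unfolding veronese_props_def zrational_vec_def by auto
  have lower: "dzb (\<lambda>z. vseq N k z i) = (\<lambda>z. - (vratio N k z * vseq N (k - 1) z i))"
    using props[of k] i unfolding veronese_props_def by auto
  have raise: "vratio N k z * dz (\<lambda>z. vseq N (k - 1) z i) z
      = vratio N k z * (vseq N k z i + vlogder N (k - 1) z * vseq N (k - 1) z i)" for z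
  proof (cases k)
    case 0
    then show ?thesis by (simp add: vratio_def)
  next
    case (Suc j)
    then show ?thesis using dz_vseq[OF N _ props[of j]] k by simp
  qed
  have "(\<lambda>z. vseq N (Suc k) z i) = (\<lambda>z. dz (\<lambda>z. vseq N k z i) z - vlogder N k z * vseq N k z i)"
    using dz_vseq[OF N _ props[of k]] k by simp
  moreover have "Suc k < N" using k N by simp
  ultimately show ?thesis
    using dzb_lowering_step[OF rat rat zrational_vratio zrational_vlogder lower raise]
      vratio_Suc dz_vratio by simp
qed

lemma herm_vseq_Suc_orth:
  assumes N: "N \<ge> 2" and k: "k \<le> N - 1" and props: "\<And>j. j \<le> k \<Longrightarrow> veronese_props N j"
    and j: "j \<le> k"
  shows "herm N (vseq N j z) (vseq N (Suc k) z) = 0"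
proof -
  have "vseq N (Suc k) z = (\<lambda>i. dzvec (vseq N k) z i - vlogder N k z * vseq N k z i)"
    using dz_vseq[OF N k props[of k]] by (simp add: dzvec_def)
  then have split: "herm N (vseq N j z) (vseq N (Suc k) z)
      = herm N (vseq N j z) (dzvec (vseq N k) z) - vlogder N k z * herm N (vseq N j z) (vseq N k z)"
    by (simp add: herm_diff_right herm_scale_right)
  show ?thesis
  proof (cases "j = k")
    case True
    then show ?thesis
      using herm_vseq_dz[OF N props[of k], of z] unfolding split by (simp add: vnorm2_def)
  next
    case False
    then have "j < k" using j by simp
    then have orth: "herm N (vseq N j' z) (vseq N k z) = 0" if "j' \<le> j" for j' z
      using props[of k] that unfolding veronese_props_def by auto
    have rat: "zrational_vec N (vseq N j)" "zrational_vec N (vseq N k)"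
      and lower: "\<And>i. i < N \<Longrightarrow> dzb (\<lambda>z. vseq N j z i) = (\<lambda>z. - (vratio N j z * vseq N (j - 1) z i))"
      using props[of j] props[of k] j unfolding veronese_props_def by auto
    have "herm N (dzbvec (vseq N j) z) (vseq N k z)
        = cnj (- vratio N j z) * herm N (vseq N (j - 1) z) (vseq N k z)"
      unfolding herm_scale_left[symmetric] by (rule herm_cong_left) (simp add: dzbvec_def lower)
    also have "\<dots> = 0" using orth[of "j - 1"] by simp
    finally have "herm N (vseq N j z) (dzvec (vseq N k) z) = dz (\<lambda>z. herm N (vseq N j z) (vseq N k z)) z"
      unfolding dz_herm[OF rat] by simp
    also have "\<dots> = 0" using orth[of j] by (simp add: wirtinger_const)
    finally show ?thesis unfolding split using orth[of j] by simp
  qed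
qed

lemma vnorm2_Suc:
  assumes N: "N \<ge> 2" and k: "Suc k \<le> N - 1" and props: "\<And>j. j \<le> k \<Longrightarrow> veronese_props N j"
  shows "vnorm2 N (Suc k) z = vratio N (Suc k) z * vnorm2 N k z"
proof -
  have k': "k \<le> N - 1" using k by simp
  have rat: "zrational_vec N (vseq N k)" "zrational_vec N (vseq N (Suc k))"
    using props[of k] zrational_vseq_Suc[OF N k' props[of k]] unfolding veronese_props_def by auto
  have orth: "herm N (vseq N k z) (vseq N (Suc k) z) = 0" for z
    using herm_vseq_Suc_orth[OF N k' props] by simp
  have "herm N (vseq N k z) (dzbvec (vseq N (Suc k)) z)
      + herm N (dzvec (vseq N k) z) (vseq N (Suc k) z)
      = dzb (\<lambda>z. herm N (vseq N k z) (vseq N (Suc k) z)) z"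
    unfolding dzb_herm[OF rat] ..
  also have "\<dots> = 0"
    using orth by (simp add: wirtinger_const)
  finally have sum0: "herm N (vseq N k z) (dzbvec (vseq N (Suc k)) z)
      + herm N (dzvec (vseq N k) z) (vseq N (Suc k) z) = 0" .
  have "herm N (vseq N k z) (dzbvec (vseq N (Suc k)) z) = - vratio N (Suc k) z * vnorm2 N k z"
    unfolding vnorm2_def herm_scale_right[symmetric]
    by (rule herm_cong_right) (simp add: dzbvec_def dzb_vseq_Suc[OF N k props])
  moreover have "herm N (dzvec (vseq N k) z) (vseq N (Suc k) z) = vnorm2 N (Suc k) z"
    using dz_vseq[OF N k' props[of k]] orth[of z]
    by (simp add: dzvec_def herm_add_left herm_scale_left vnorm2_def)
  ultimately show ?thesis
    using sum0 by (simp add: algebra_simps)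
qed

lemma veronese_props_Suc:
  assumes N: "N \<ge> 2" and k: "Suc k \<le> N - 1" and props: "\<And>j. j \<le> k \<Longrightarrow> veronese_props N j"
  shows "veronese_props N (Suc k)"
proof -
  have "vnorm2 N (Suc k) z = of_real (vconst N (Suc k)) * rho z ^ (N - 1) / rho z ^ (2 * Suc k)"
    for z
  proof -
    have "vnorm2 N k z = of_real (vconst N k) * rho z ^ (N - 1) / rho z ^ (2 * k)"
      using props[of k] unfolding veronese_props_def by auto
    then have "vnorm2 N (Suc k) z
        = vratio N (Suc k) z * (of_real (vconst N k) * rho z ^ (N - 1) / rho z ^ (2 * k))"
      using vnorm2_Suc[OF N k props] by simp
    also have "\<dots> = of_real (vconst N (Suc k)) * rho z ^ (N - 1) / rho z ^ (2 * Suc k)"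
      using rho_nonzero[of z]
      by (simp add: vratio_def vconst_Suc field_simps power2_eq_square)
    finally show ?thesis .
  qed
  then show ?thesis
    unfolding veronese_props_def
    using zrational_vseq_Suc[OF N _ props[of k]] herm_vseq_Suc_orth[OF N _ props] dzb_vseq_Suc[OF N k props] k
    by auto
qed

lemma veronese_props_holds:
  assumes N: "N \<ge> 2"
  shows "k \<le> N - 1 \<Longrightarrow> veronese_props N k"
proof (induction k rule: less_induct)
  case (less k)
  show ?case
  proof (cases k)
    case 0
    then show ?thesis using veronese_props_0 N by simp
  next
    case (Suc k')
    have "veronese_props N (Suc k')"
      using less Suc by (intro veronese_props_Suc[OF N]) auto
    then show ?thesis using Suc by simp
  qed
qed

context
  fixes N :: nat
  assumes N: "N \<ge> 2"
begin

lemma herm_vseq_orth: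
  assumes "j \<le> N - 1" "k \<le> N - 1" "j \<noteq> k"
  shows "herm N (vseq N j z) (vseq N k z) = 0"
proof (cases "j < k")
  case True
  then show ?thesis using veronese_props_holds[OF N assms(2)] unfolding veronese_props_def by auto
next
  case False
  then have "herm N (vseq N k z) (vseq N j z) = 0"
    using assms veronese_props_holds[OF N assms(1)] unfolding veronese_props_def by auto
  then show ?thesis using herm_commute[of N "vseq N k z" "vseq N j z"] by simp
qed

lemma vnorm2_eq: "k \<le> N - 1 \<Longrightarrow> vnorm2 N k = (\<lambda>z. of_real (vconst N k) * rho z ^ (N - 1) / rho z ^ (2 * k))"
  using veronese_props_holds[OF N] unfolding veronese_props_def by auto

lemma vnorm2_nonzero: "k \<le> N - 1 \<Longrightarrow> vnorm2 N k z \<noteq> 0"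
  using vnorm2_eq[of k] vconst_pos[of k N] rho_nonzero[of z] by auto

lemma zrational_vseq: "k \<le> N - 1 \<Longrightarrow> zrational_vec N (vseq N k)"
  using veronese_props_holds[OF N] unfolding veronese_props_def by auto

lemma dzb_vseq:
  "k \<le> N - 1 \<Longrightarrow> i < N \<Longrightarrow> dzb (\<lambda>z. vseq N k z i) = (\<lambda>z. - (vratio N k z * vseq N (k - 1) z i))"
  using veronese_props_holds[OF N] unfolding veronese_props_def by auto

lemma dz_vnorm2: "k \<le> N - 1 \<Longrightarrow> dz (vnorm2 N k) z = vnorm2 N k z * vlogder N k z"
  unfolding vnorm2_eq by (rule dz_rho_power_ratio[OF N])

lemma zrational_vnorm2: "k \<le> N - 1 \<Longrightarrow> zrational (vnorm2 N k)"
  unfolding vnorm2_def[abs_def] using zrational_vseq by (auto intro: zrational_herm)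

end

lemma cnj_vnorm2: "cnj (vnorm2 N k z) = vnorm2 N k z"
  unfolding vnorm2_def herm_commute ..

lemma cnj_vratio: "cnj (vratio N k z) = vratio N k z"
  unfolding vratio_def rho_of_real by simp

section \<open>Derivatives of the projectors\<close>

definition shiftmat :: "nat \<Rightarrow> nat \<Rightarrow> complex \<Rightarrow> nat \<Rightarrow> nat \<Rightarrow> complex" where
  "shiftmat N k z i j = vseq N (Suc k) z i * cnj (vseq N k z j) / vnorm2 N k z"

lemma projector_eq: "projector N k z i j = vseq N k z i * cnj (vseq N k z j) / vnorm2 N k z"
  unfolding projector_def vnorm2_def vseq_def Let_def ..

lemma dz_projector:
  assumes N: "N \<ge> 2" and k: "k \<le> N - 2" and i: "i < N" and j: "j < N"
  shows "dz (\<lambda>w. projector N k w i j) z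
    = shiftmat N k z i j - (if k = 0 then 0 else shiftmat N (k - 1) z i j)"
proof -
  have k1: "k \<le> N - 1" using k by auto
  have rat: "zrational (\<lambda>z. vseq N k z i)" "zrational (\<lambda>z. vseq N k z j)"
    using zrational_vseq[OF N k1] i j unfolding zrational_vec_def by auto
  then have "dz (\<lambda>w. projector N k w i j) z
     = ((dz (\<lambda>z. vseq N k z i) z * cnj (vseq N k z j) + vseq N k z i * cnj (dzb (\<lambda>z. vseq N k z j) z))
          * vnorm2 N k z - vseq N k z i * cnj (vseq N k z j) * dz (vnorm2 N k) z) / vnorm2 N k z ^ 2"
    unfolding projector_eq[abs_def] using zrational_vnorm2[OF N k1] vnorm2_nonzero[OF N k1]
    by (simp add: zrational_wirtinger_differentiable wirtinger_divide wirtinger_mult wirtinger_cnj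
        algebra_simps)
  also have "\<dots> = (((vseq N (Suc k) z i + vlogder N k z * vseq N k z i) * cnj (vseq N k z j)
        - vseq N k z i * (vratio N k z * cnj (vseq N (k - 1) z j))) * vnorm2 N k z
        - vseq N k z i * cnj (vseq N k z j) * (vnorm2 N k z * vlogder N k z)) / vnorm2 N k z ^ 2"
    unfolding dz_vseq[OF N k1 veronese_props_holds[OF N k1]] dzb_vseq[OF N k1 j] dz_vnorm2[OF N k1]
    by (simp add: cnj_vratio algebra_simps)
  also have "\<dots> = shiftmat N k z i j - vratio N k z * vseq N k z i * cnj (vseq N (k - 1) z j) / vnorm2 N k z"
    unfolding shiftmat_def using vnorm2_nonzero[OF N k1, of z] by (simp add: field_simps power2_eq_square)
  also have "\<dots> = shiftmat N k z i j - (if k = 0 then 0 else shiftmat N (k - 1) z i j)"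
  proof (cases k)
    case 0
    then show ?thesis by (simp add: vratio_def)
  next
    case (Suc k')
    have "vnorm2 N k z = vratio N k z * vnorm2 N k' z"
      unfolding Suc using k Suc by (intro vnorm2_Suc[OF N] veronese_props_holds[OF N]) auto
    moreover have "vnorm2 N k' z \<noteq> 0" using vnorm2_nonzero[OF N, of k' z] k Suc by auto
    ultimately show ?thesis unfolding shiftmat_def using Suc vnorm2_nonzero[OF N k1, of z]
      by (simp add: field_simps)
  qed
  finally show ?thesis .
qed

section \<open>The induced metric\<close>

definition alpha_diff :: "nat \<Rightarrow> (nat \<Rightarrow> real) \<Rightarrow> nat \<Rightarrow> real" where
  "alpha_diff N \<alpha> k = \<alpha> k - (if k < N - 2 then \<alpha> (Suc k) else 0)"

context
  fixes N :: nat
  assumes N: "N \<ge> 2"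
begin

lemma trprod_shiftmat:
  assumes "k \<le> N - 2" "l \<le> N - 2"
  shows "trprod N (shiftmat N k z) (shiftmat N l z) = 0"
proof -
  have "trprod N (shiftmat N k z) (shiftmat N l z)
     = herm N (vseq N l z) (vseq N (Suc k) z) * herm N (vseq N k z) (vseq N (Suc l) z)
         / (vnorm2 N k z * vnorm2 N l z)"
    unfolding shiftmat_def[abs_def] by (rule trprod_rank_one)
  moreover have "herm N (vseq N l z) (vseq N (Suc k) z) = 0 \<or> herm N (vseq N k z) (vseq N (Suc l) z) = 0"
    using assms N by (cases "l = Suc k") (auto intro!: herm_vseq_orth[OF N])
  ultimately show ?thesis by auto
qed

lemma trprod_shiftmat_adjoint:
  assumes k: "k \<le> N - 2" and l: "l \<le> N - 2"
  shows "trprod N (shiftmat N k z) (\<lambda>i j. cnj (shiftmat N l z j i))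
    = (if l = k then vratio N (Suc k) z else 0)"
proof -
  have "trprod N (shiftmat N k z) (\<lambda>i j. cnj (shiftmat N l z j i))
     = herm N (vseq N (Suc l) z) (vseq N (Suc k) z) * herm N (vseq N k z) (vseq N l z)
         / (vnorm2 N k z * vnorm2 N l z)"
  proof -
    have "(\<lambda>i j. cnj (shiftmat N l z j i)) = (\<lambda>i j. vseq N l z i * cnj (vseq N (Suc l) z j) / vnorm2 N l z)"
      by (simp add: shiftmat_def cnj_vnorm2 mult.commute)
    then show ?thesis
      unfolding shiftmat_def[abs_def] by (simp only: trprod_rank_one)
  qed
  also have "\<dots> = (if l = k then vratio N (Suc k) z else 0)"
  proof (cases "l = k")
    case True
    have "vnorm2 N (Suc k) z = vratio N (Suc k) z * vnorm2 N k z"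
      using k N by (intro vnorm2_Suc[OF N] veronese_props_holds[OF N]) auto
    moreover have "vnorm2 N k z \<noteq> 0" using k N by (intro vnorm2_nonzero[OF N]) auto
    ultimately show ?thesis unfolding True vnorm2_def[symmetric] by simp
  next
    case False
    then have "herm N (vseq N k z) (vseq N l z) = 0"
      using k l N by (intro herm_vseq_orth[OF N]) auto
    then show ?thesis using False by simp
  qed
  finally show ?thesis .
qed

lemma zrational_projector: "k \<le> N - 1 \<Longrightarrow> i < N \<Longrightarrow> j < N \<Longrightarrow> zrational (\<lambda>w. projector N k w i j)"
  unfolding projector_eq using zrational_vseq[OF N]
  by (intro zrational_divide zrational_mult zrational_cnj zrational_vnorm2[OF N] vnorm2_nonzero[OF N])
    (auto simp: zrational_vec_def)

lemma dz_Pmat: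
  assumes i: "i < N" and j: "j < N"
  shows "dz (\<lambda>w. Pmat N \<alpha> w i j) z = (\<Sum>k\<le>N - 2. of_real (alpha_diff N \<alpha> k) * shiftmat N k z i j)"
proof -
  have wd: "wirtinger_differentiable (\<lambda>w. projector N k w i j)" if "k \<in> {..N - 2}" for k
    using i j that by (auto intro!: zrational_wirtinger_differentiable zrational_projector)
  have "dz (\<lambda>w. Pmat N \<alpha> w i j) = (\<lambda>z. \<Sum>k\<le>N - 2. dz (\<lambda>w. of_real (\<alpha> k) * projector N k w i j) z)"
    unfolding Pmat_def by (intro wirtinger_sum wirtinger_mult wirtinger_const wd)
  then have "dz (\<lambda>w. Pmat N \<alpha> w i j) z = (\<Sum>k\<le>N - 2. dz (\<lambda>w. of_real (\<alpha> k) * projector N k w i j) z)"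
    by simp
  also have "\<dots> = (\<Sum>k\<le>N - 2. of_real (\<alpha> k) * (shiftmat N k z i j - (if k = 0 then 0 else shiftmat N (k - 1) z i j)))"
    using wd by (intro sum.cong refl) (simp add: wirtinger_mult wirtinger_const dz_projector[OF N _ i j])
  also have "\<dots> = (\<Sum>k\<le>N - 2. (of_real (\<alpha> k) - (if k < N - 2 then of_real (\<alpha> (Suc k)) else 0))
      * shiftmat N k z i j)"
    by (rule sum_atMost_mult_backward_diff)
  also have "\<dots> = (\<Sum>k\<le>N - 2. of_real (alpha_diff N \<alpha> k) * shiftmat N k z i j)"
    by (intro sum.cong refl) (simp add: alpha_diff_def)
  finally show ?thesis .
qed

lemma dzb_Pmat:
  assumes i: "i < N" and j: "j < N"
  shows "dzb (\<lambda>w. Pmat N \<alpha> w i j) z = (\<Sum>k\<le>N - 2. of_real (alpha_diff N \<alpha> k) * cnj (shiftmat N k z j i))"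
proof -
  have "(\<lambda>w. Pmat N \<alpha> w i j) = (\<lambda>w. cnj (Pmat N \<alpha> w j i))"
    unfolding Pmat_def projector_eq cnj_sum by (simp add: cnj_vnorm2 mult.commute)
  moreover have "wirtinger_differentiable (\<lambda>w. Pmat N \<alpha> w j i)"
    unfolding Pmat_def using i j
    by (auto intro!: zrational_wirtinger_differentiable zrational_sum zrational_mult
        zrational_const zrational_projector)
  ultimately show ?thesis using dz_Pmat[OF j i] by (simp add: wirtinger_cnj)
qed

lemma gpp_eq_0: "gpp N \<alpha> z = 0"
proof -
  have "gpp N \<alpha> z = trprod N (\<lambda>i j. \<Sum>k\<le>N - 2. of_real (alpha_diff N \<alpha> k) * shiftmat N k z i j)
                              (\<lambda>i j. \<Sum>k\<le>N - 2. of_real (alpha_diff N \<alpha> k) * shiftmat N k z i j)"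
    unfolding gpp_def by (rule trprod_cong) (simp_all add: dz_Pmat)
  then show ?thesis
    unfolding trprod_sum_sum by (simp add: trprod_shiftmat)
qed

lemma gpm_eq_sum: "gpm N \<alpha> z = (\<Sum>k\<le>N - 2. of_real ((alpha_diff N \<alpha> k)\<^sup>2) * vratio N (Suc k) z)"
proof -
  have "gpm N \<alpha> z = trprod N (\<lambda>i j. \<Sum>k\<le>N - 2. of_real (alpha_diff N \<alpha> k) * shiftmat N k z i j)
                              (\<lambda>i j. \<Sum>k\<le>N - 2. of_real (alpha_diff N \<alpha> k) * cnj (shiftmat N k z j i))"
    unfolding gpm_def by (rule trprod_cong) (simp_all add: dz_Pmat dzb_Pmat)
  then show ?thesis
    unfolding trprod_sum_sum by (simp add: trprod_shiftmat_adjoint power2_eq_square if_distrib cong: if_cong)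
qed

end

lemma ex_forward_diff_nonzero:
  fixes \<alpha> :: "nat \<Rightarrow> real"
  assumes "\<exists>k\<le>M. \<alpha> k \<noteq> 0"
  shows "\<exists>k\<le>M. \<alpha> k - (if k < M then \<alpha> (Suc k) else 0) \<noteq> 0"
proof (rule ccontr)
  assume "\<not> ?thesis"
  then have step: "\<And>k. k \<le> M \<Longrightarrow> \<alpha> k - (if k < M then \<alpha> (Suc k) else 0) = 0" by auto
  have "\<alpha> (M - d) = 0" for d
  proof (induction d)
    case 0
    then show ?case using step[of M] by simp
  next
    case (Suc d)
    then show ?case using step[of "M - Suc d"] by (cases "d < M") (auto simp: Suc_diff_Suc)
  qed
  then have "\<alpha> k = 0" if "k \<le> M" for k
    using that by (metis diff_diff_cancel)
  with assms show False by auto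
qed

definition metric_const :: "nat \<Rightarrow> (nat \<Rightarrow> real) \<Rightarrow> real" where
  "metric_const N \<alpha> = (\<Sum>k\<le>N - 2. (alpha_diff N \<alpha> k)\<^sup>2 * real (Suc k * (N - Suc k)))"

lemma metric_const_pos:
  assumes N: "N \<ge> 2" and "\<exists>k\<le>N - 2. \<alpha> k \<noteq> 0"
  shows "metric_const N \<alpha> > 0"
proof -
  obtain k where k: "k \<le> N - 2" "alpha_diff N \<alpha> k \<noteq> 0"
    using ex_forward_diff_nonzero[OF assms(2)] unfolding alpha_diff_def by auto
  have "0 < Suc k * (N - Suc k)" using k N by simp
  then have "0 < (alpha_diff N \<alpha> k)\<^sup>2 * real (Suc k * (N - Suc k))"
    using k by (intro mult_pos_pos) (simp, simp only: of_nat_0_less_iff)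
  then show ?thesis
    unfolding metric_const_def by (intro sum_pos2[of _ k]) (use k in auto)
qed

lemma gpm_eq:
  assumes "N \<ge> 2"
  shows "gpm N \<alpha> z = of_real (metric_const N \<alpha>) / rho z ^ 2"
  unfolding gpm_eq_sum[OF assms] metric_const_def vratio_def of_real_sum sum_divide_distrib
  by (intro sum.cong refl) simp

lemma round_metric_curvature:
  assumes "A > 0"
  shows "- 4 / (of_real A / rho z ^ 2) * dz (dzb (\<lambda>w. Ln (of_real A / rho w ^ 2))) z = of_real (8 / A)"
proof -
  have wd: "wirtinger_differentiable (\<lambda>w. of_real A / rho w ^ 2)"
    by (simp add: wirtinger_rules wirtinger_rho rho_nonzero)
  have pos: "of_real A / rho w ^ 2 \<notin> \<real>\<^sub>\<le>\<^sub>0" for w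
  proof -
    have "A / (1 + (cmod w)\<^sup>2)\<^sup>2 > 0"
      by (intro divide_pos_pos assms zero_less_power add_pos_nonneg) auto
    then show ?thesis
      unfolding rho_of_real of_real_power[symmetric] of_real_divide[symmetric]
        nonpos_Reals_of_real_iff by simp
  qed
  have A: "(of_real A :: complex) \<noteq> 0" using assms by simp
  have "dzb (\<lambda>w. Ln (of_real A / rho w ^ 2)) = (\<lambda>w. - 2 * w / rho w)"
    unfolding wirtinger_Ln(3)[OF wd pos] using A
    by (simp add: wirtinger_rules wirtinger_rho rho_nonzero fun_eq_iff field_simps power2_eq_square eval_nat_numeral)
  moreover have "dz (\<lambda>w. - 2 * w / rho w) = (\<lambda>w. - 2 / rho w ^ 2)"
    by (simp add: wirtinger_rules wirtinger_rho rho_nonzero fun_eq_iff) (simp add: rho_def algebra_simps)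
  ultimately show ?thesis
    using A rho_nonzero[of z] by (simp add: field_simps)
qed

theorem mainTheorem2:
  fixes N :: nat and \<alpha> :: "nat \<Rightarrow> real"
  assumes "N \<ge> 2"
    and "\<exists>k\<le>N - 2. \<alpha> k \<noteq> 0"
  shows "\<exists>a::real. a > 0
     \<and> (\<forall>z. gpp N \<alpha> z = 0)
     \<and> (\<forall>z. gpm N \<alpha> z = of_real (a / (1 + (cmod z)\<^sup>2)\<^sup>2))
     \<and> (\<forall>z. - 4 / gpm N \<alpha> z * dz (dzb (\<lambda>w. Ln (gpm N \<alpha> w))) z = of_real (8 / a))"
proof (intro exI conjI allI)
  let ?A = "metric_const N \<alpha>"
  have gpm: "gpm N \<alpha> = (\<lambda>w. of_real ?A / rho w ^ 2)"
    using gpm_eq[OF assms(1)] by auto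
  show "?A > 0" by (rule metric_const_pos[OF assms])
  show "gpp N \<alpha> z = 0" for z by (rule gpp_eq_0[OF assms(1)])
  show "gpm N \<alpha> z = of_real (?A / (1 + (cmod z)\<^sup>2)\<^sup>2)" for z
    unfolding gpm by (simp add: rho_of_real)
  show "- 4 / gpm N \<alpha> z * dz (dzb (\<lambda>w. Ln (gpm N \<alpha> w))) z = of_real (8 / ?A)" for z
    unfolding gpm by (rule round_metric_curvature[OF \<open>?A > 0\<close>])
qed

end
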